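(* A map $\operatorname{z}\colon\operatorname{Conv}(\mathbb{R}^n;\mathbb{R})\to\mathbb{R}^n$ is a continuous, dually translation covariant, vertically translation invariant valuation that is homogeneous of degree $0$ if and only if there exists $t\in\mathbb{R}^n$ such that $\operatorname{z}(v)=t$ for every $v\in\operatorname{Conv}(\mathbb{R}^n;\mathbb{R})$. For $n\geq2$, such a $\operatorname{z}$ is in addition rotation equivariant if and only if $\operatorname{z}\equiv o$. For $n=1$, the same holds with rotation equivariance replaced by reflection equivariance ($\operatorname{z}(v(-\,\cdot))=-\operatorname{z}(v)$).
   Context: $\operatorname{Conv}(\mathbb{R}^n;\mathbb{R})$: convex functions $\mathbb{R}^n\to\mathbb{R}$ with the topology of pointwise convergence. Valuation: $\operatorname{z}(v\vee w)+\operatorname{z}(v\wedge w)=\operatorname{z}(v)+\operatorname{z}(w)$ whenever $v,w,v\vee w,v\wedge w$ are in the space. Dually translation covariant: there is $\operatorname{z}^0$ with $\operatorname{z}(v+\langle x,\cdot\rangle)=\operatorname{z}(v)+\operatorname{z}^0(v)x$. Vertically translation invariant: $\operatorname{z}(v+c)=\operatorname{z}(v)$ for $c\in\mathbb{R}$. Homogeneous of degree $s$: $\operatorname{z}(\lambda v)=\lambda^s\operatorname{z}(v)$ for $\lambda>0$. Rotation equivariant: $\operatorname{z}(v\circ\vartheta^{-1})=\vartheta\operatorname{z}(v)$ for $\vartheta\in\operatorname{SO}(n)$. $o$ denotes the origin. *)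

theory Defs
  imports "HOL-Analysis.Analysis"
begin

text \<open>Conv(R^n;R): finite-valued convex functions on R^n. The topology on
  functions is the product (pointwise convergence) topology from Function_Topology.\<close>
definition Conv :: "(real^'n \<Rightarrow> real) set" where
  "Conv = {v. convex_on UNIV v}"

definition is_valuation :: "((real^'n \<Rightarrow> real) \<Rightarrow> real^'n) \<Rightarrow> bool" where
  "is_valuation z \<longleftrightarrow>
     (\<forall>v w. v \<in> Conv \<and> w \<in> Conv \<and> sup v w \<in> Conv \<and> inf v w \<in> Conv \<longrightarrow>
        z (sup v w) + z (inf v w) = z v + z w)"

definition dually_translation_covariant :: "((real^'n \<Rightarrow> real) \<Rightarrow> real^'n) \<Rightarrow> bool" where
  "dually_translation_covariant z \<longleftrightarrow>
     (\<exists>z0 :: (real^'n \<Rightarrow> real) \<Rightarrow> real. \<forall>v\<in>Conv. \<forall>x.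
        z (\<lambda>y. v y + x \<bullet> y) = z v + z0 v *\<^sub>R x)"

definition vertically_translation_invariant :: "((real^'n \<Rightarrow> real) \<Rightarrow> real^'n) \<Rightarrow> bool" where
  "vertically_translation_invariant z \<longleftrightarrow> (\<forall>v\<in>Conv. \<forall>c::real. z (\<lambda>y. v y + c) = z v)"

definition homogeneous_deg :: "real \<Rightarrow> ((real^'n \<Rightarrow> real) \<Rightarrow> real^'n) \<Rightarrow> bool" where
  "homogeneous_deg s z \<longleftrightarrow> (\<forall>v\<in>Conv. \<forall>r::real. r > 0 \<longrightarrow> z (\<lambda>y. r * v y) = r powr s *\<^sub>R z v)"

definition rotation_equivariant :: "((real^'n \<Rightarrow> real) \<Rightarrow> real^'n) \<Rightarrow> bool" where
  "rotation_equivariant z \<longleftrightarrow>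
     (\<forall>A :: real^'n^'n. orthogonal_matrix A \<and> det A = 1 \<longrightarrow>
        (\<forall>v\<in>Conv. z (\<lambda>x. v (matrix_inv A *v x)) = A *v z v))"

definition reflection_equivariant :: "((real^'n \<Rightarrow> real) \<Rightarrow> real^'n) \<Rightarrow> bool" where
  "reflection_equivariant z \<longleftrightarrow> (\<forall>v\<in>Conv. z (\<lambda>x. v (- x)) = - z v)"

end

theory Submission imports Defs begin

text \<open>Homogeneity of degree 0 makes z constant along the rays r v, r > 0, and these converge
  pointwise to the zero function as r \<rightarrow> 0; by continuity z v = z 0 for every v. A constant
  vector t is fixed by all rotations only if t = 0 (when n \<ge> 2, a rotation by \<pi> in a
  coordinate plane negates a chosen coordinate), and t = -t forces t = 0 in the reflection case.\<close>

lemma Conv_const: "(\<lambda>y. c) \<in> Conv"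
  by (simp add: Conv_def convex_on_const)

lemma Conv_add_const: "v \<in> Conv \<Longrightarrow> (\<lambda>y. v y + c) \<in> Conv"
  unfolding Conv_def mem_Collect_eq
  by (intro convex_on_add) (auto simp: convex_on_def simp flip: distrib_right)

lemma Conv_add_inner: "v \<in> Conv \<Longrightarrow> (\<lambda>y. v y + x \<bullet> y) \<in> Conv"
  unfolding Conv_def mem_Collect_eq
  by (intro convex_on_add) (auto simp: convex_on_def inner_add_right)

lemma Conv_scale: "v \<in> Conv \<Longrightarrow> r \<ge> 0 \<Longrightarrow> (\<lambda>y. r * v y) \<in> Conv"
  unfolding Conv_def mem_Collect_eq by (intro convex_on_cmul) auto

lemma Conv_compose_linear: "v \<in> Conv \<Longrightarrow> linear f \<Longrightarrow> (\<lambda>x. v (f x)) \<in> Conv"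
  unfolding Conv_def convex_on_def by (simp add: linear_add linear_scale)

lemma LIMSEQ_inverse_Suc_scale_fun:
  fixes v :: "'a \<Rightarrow> real"
  shows "(\<lambda>k. \<lambda>y. (1 / real (Suc k)) * v y) \<longlonglongrightarrow> (\<lambda>y. 0)"
proof -
  have "(\<lambda>k. (1 / real (Suc k)) * v y) \<longlonglongrightarrow> 0" for y
    using tendsto_mult_left_zero[OF LIMSEQ_inverse_real_of_nat] by (simp add: divide_inverse)
  then have "limitin (product_topology (\<lambda>_. euclidean) UNIV)
      (\<lambda>k. \<lambda>y. (1 / real (Suc k)) * v y) (\<lambda>y. 0) sequentially"
    unfolding limitin_componentwise by simp
  then show ?thesis
    unfolding euclidean_product_topology limitin_canonical_iff .
qed

lemma continuous_homogeneous_deg_0_imp_const: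
  fixes z :: "(real^'n \<Rightarrow> real) \<Rightarrow> real^'n"
  assumes cont: "continuous_on Conv z" and hom: "homogeneous_deg 0 z" and v: "v \<in> Conv"
  shows "z v = z (\<lambda>y. 0)"
proof -
  have scaled: "(\<lambda>y. (1 / real (Suc k)) * v y) \<in> Conv" for k
    using Conv_scale[OF v, of "1 / real (Suc k)"] by simp
  have "(\<lambda>k. z (\<lambda>y. (1 / real (Suc k)) * v y)) \<longlonglongrightarrow> z (\<lambda>y. 0)"
    using continuous_on_tendsto_compose[OF cont LIMSEQ_inverse_Suc_scale_fun Conv_const] scaled
    by simp
  moreover have "z (\<lambda>y. (1 / real (Suc k)) * v y) = z v" for k
    using hom[unfolded homogeneous_deg_def, rule_format, OF v, of "1 / real (Suc k)"] by simp
  ultimately show ?thesis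
    by (simp add: LIMSEQ_const_iff)
qed

lemma const_imp_valuation_properties:
  fixes z :: "(real^'n \<Rightarrow> real) \<Rightarrow> real^'n"
  assumes const: "\<forall>v\<in>Conv. z v = t"
  shows "continuous_on Conv z" "dually_translation_covariant z"
    "vertically_translation_invariant z" "is_valuation z" "homogeneous_deg 0 z"
proof -
  show "continuous_on Conv z"
    using continuous_on_cong[of Conv Conv z "\<lambda>_. t"] const by simp
  show "dually_translation_covariant z"
    unfolding dually_translation_covariant_def
    by (rule exI[of _ "\<lambda>_. 0"]) (simp add: const Conv_add_inner)
  show "vertically_translation_invariant z"
    unfolding vertically_translation_invariant_def by (simp add: const Conv_add_const)
  show "is_valuation z"
    unfolding is_valuation_def using const by auto
  show "homogeneous_deg 0 z"
    unfolding homogeneous_deg_def using const by (simp add: Conv_scale)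
qed

lemma rotation_negating_coordinate:
  fixes a :: "'n::finite"
  assumes "CARD('n) \<ge> 2"
  obtains A :: "real^'n^'n"
  where "orthogonal_matrix A" "det A = 1" "\<And>t. (A *v t) $ a = - t $ a"
proof -
  obtain b :: 'n where ab: "a \<noteq> b"
    using assms by (metis card_2_iff' ex_card)
  define A :: "real^'n^'n"
    where "A = (\<chi> i j. if i = j then (if i = a \<or> i = b then -1 else 1) else 0)"
  have "orthogonal_matrix A"
    unfolding orthogonal_matrix
    by (auto simp: vec_eq_iff matrix_matrix_mult_def A_def mat_def transpose_def
        if_distrib[of "\<lambda>x. x * _"] cong: if_cong)
  moreover have "det A = 1"
  proof -
    have "det A = (\<Prod>i\<in>UNIV. if i = a \<or> i = b then -1 else 1)"
      by (subst det_diagonal) (simp_all add: A_def)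
    also have "\<dots> = (\<Prod>i\<in>{a, b}. -1 :: real)"
      by (rule prod.mono_neutral_cong_right) auto
    finally show ?thesis
      using ab by simp
  qed
  moreover have "(A *v t) $ a = - t $ a" for t
    by (simp add: matrix_vector_mult_def A_def if_distrib[of "\<lambda>x. x * _"] cong: if_cong)
  ultimately show thesis
    using that by blast
qed

lemma rotation_equivariant_const_iff:
  fixes z :: "(real^'n \<Rightarrow> real) \<Rightarrow> real^'n"
  assumes const: "\<forall>v\<in>Conv. z v = t" and n: "CARD('n) \<ge> 2"
  shows "rotation_equivariant z \<longleftrightarrow> t = 0"
proof
  assume rot: "rotation_equivariant z"
  show "t = 0"
  proof (rule ccontr)
    assume "t \<noteq> 0"
    then obtain a where a: "t $ a \<noteq> 0"
      by (auto simp: vec_eq_iff)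
    obtain A :: "real^'n^'n" where "orthogonal_matrix A" "det A = 1" "(A *v t) $ a = - t $ a"
      using rotation_negating_coordinate[OF n] by metis
    moreover have "A *v t = t"
    proof -
      have "\<forall>v\<in>Conv. z (\<lambda>x. v (matrix_inv A *v x)) = A *v z v"
        using rot calculation(1,2) unfolding rotation_equivariant_def by blast
      from bspec[OF this Conv_const[of 0]] show ?thesis
        using bspec[OF const Conv_const[of 0]] by simp
    qed
    ultimately show False
      using a by simp
  qed
next
  assume "t = 0"
  then show "rotation_equivariant z"
    unfolding rotation_equivariant_def
    using const by (auto intro!: Conv_compose_linear matrix_vector_mul_linear)
qed

lemma reflection_equivariant_const_iff:
  fixes z :: "(real^'n \<Rightarrow> real) \<Rightarrow> real^'n"
  assumes const: "\<forall>v\<in>Conv. z v = t"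
  shows "reflection_equivariant z \<longleftrightarrow> t = 0"
proof
  assume "reflection_equivariant z"
  from bspec[OF this[unfolded reflection_equivariant_def] Conv_const[of 0]]
  have "t = - t"
    using bspec[OF const Conv_const[of 0]] by simp
  then show "t = 0"
    by (metis eq_neg_iff_add_eq_0 scaleR_2 scaleR_eq_0_iff zero_neq_numeral)
next
  assume "t = 0"
  moreover have reflected: "(\<lambda>x. v (- x)) \<in> Conv" if "v \<in> Conv" for v
    using that linear_uminus by (rule Conv_compose_linear)
  ultimately show "reflection_equivariant z"
    unfolding reflection_equivariant_def using const by (simp add: reflected)
qed

theorem theorem5p4:
  fixes z :: "(real^'n \<Rightarrow> real) \<Rightarrow> real^'n"
  shows "((continuous_on Conv z \<and> dually_translation_covariant z \<and>
           vertically_translation_invariant z \<and> is_valuation z \<and> homogeneous_deg 0 z)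
          \<longleftrightarrow> (\<exists>t. \<forall>v\<in>Conv. z v = t))
     \<and> ((continuous_on Conv z \<and> dually_translation_covariant z \<and>
           vertically_translation_invariant z \<and> is_valuation z \<and> homogeneous_deg 0 z)
          \<longrightarrow> (CARD('n) \<ge> 2 \<longrightarrow> (rotation_equivariant z \<longleftrightarrow> (\<forall>v\<in>Conv. z v = 0)))
            \<and> (CARD('n) = 1 \<longrightarrow> (reflection_equivariant z \<longleftrightarrow> (\<forall>v\<in>Conv. z v = 0))))"
  (is "(?P \<longleftrightarrow> _) \<and> _")
proof -
  have const: "\<forall>v\<in>Conv. z v = z (\<lambda>y. 0)" if ?P
    using that continuous_homogeneous_deg_0_imp_const by blast
  have zero_iff: "(\<forall>v\<in>Conv. z v = 0) \<longleftrightarrow> z (\<lambda>y. 0) = 0" if ?P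
    using const[OF that] Conv_const[of 0] by auto
  have "?P \<longleftrightarrow> (\<exists>t. \<forall>v\<in>Conv. z v = t)"
  proof
    assume ?P
    then show "\<exists>t. \<forall>v\<in>Conv. z v = t"
      using const by blast
  next
    assume "\<exists>t. \<forall>v\<in>Conv. z v = t"
    then obtain t where "\<forall>v\<in>Conv. z v = t"
      by blast
    from const_imp_valuation_properties[OF this] show ?P
      by blast
  qed
  moreover have "CARD('n) \<ge> 2 \<longrightarrow> (rotation_equivariant z \<longleftrightarrow> (\<forall>v\<in>Conv. z v = 0))" if ?P
    using rotation_equivariant_const_iff[OF const[OF that]] zero_iff[OF that] by blast
  moreover have "reflection_equivariant z \<longleftrightarrow> (\<forall>v\<in>Conv. z v = 0)" if ?P
    using reflection_equivariant_const_iff[OF const[OF that]] zero_iff[OF that] by blast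
  ultimately show ?thesis
    by blast
qed

end
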